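(* Let $0<a<m<b<1$ and let $g(u)=0$ if $u<a$, $g(u)=1$ if $a\le u\le b$, $g(u)=m$ if $u>b$. Let $k:\mathbb R\to\mathbb R$ be a piecewise differentiable function satisfying: (H1) $k\ge 0$ and $\int_{-\infty}^{\infty}k(x)\,dx=1$; (H2) $k(x)=k(-x)$ for all $x$; (H3) $k(x)>0$ on $(-\sigma,\sigma)$ for some $0<\sigma\le\infty$; (H4) for all $\lambda\in(0,1)$ and $A>B$, $x\mapsto k(x-A)-\lambda k(x-B)$ has fewer than $2$ sign changes; (H5) for all $\lambda\in(0,1)$ and $A>B$, $x\mapsto k(x-r-A)-\lambda k(x-r-B)-k(x+r+A)+\lambda k(x+r+B)$ has fewer than $4$ sign changes for all sufficiently large $r>0$. Let $Q[u](x)=\int_{-\infty}^{\infty}k(x-y)g(u(y))\,dy$, $w_1(x)=\int_x^\infty k(y)\,dy$, $c^*=\tfrac12\sup\{x: Q[w_1](x)=a\}$, $w_2(x)=Q[w_1](x+c^* )$, and $W_n(x)=w_1(x-nc^* )$ for $n$ even, $W_n(x)=w_2(x-nc^* )$ for $n$ odd. For $i=1,2$ let $\Phi_i(\ell)=\sup\{x\in\mathbb R: w_i(x)=\ell\}$, and for $\ell\in(0,m)$ let $\xi_n(\ell)=\sup\{x\in\mathbb R: W_n(x)=\ell\}$ and, for $n\ge1$, $c_n(\ell)=\xi_n(\ell)-\xi_{n-1}(\ell)$. Assume $\|w_2\|_\infty<b$. Then for all $\ell\in(0,m)$ and all $n\ge1$, $c_n(\ell)=c^*+\Phi_1(\ell)-\Phi_2(\ell)$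 if $n$ is even, and $c_n(\ell)=c^*+\Phi_2(\ell)-\Phi_1(\ell)$ if $n$ is odd.
   Context: $\|\cdot\|_\infty$ is the supremum norm. *)

theory Defs
  imports "HOL-Analysis.Analysis"
begin

definition gfun :: "real \<Rightarrow> real \<Rightarrow> real \<Rightarrow> real \<Rightarrow> real" where
  "gfun a m b u = (if u < a then 0 else if u \<le> b then 1 else m)"

definition piecewise_diff :: "(real \<Rightarrow> real) \<Rightarrow> bool" where
  "piecewise_diff k \<longleftrightarrow> (\<exists>S. (\<forall>p q. finite (S \<inter> {p..q})) \<and> (\<forall>x. x \<notin> S \<longrightarrow> k differentiable (at x)))"

definition sign_changes_ge :: "(real \<Rightarrow> real) \<Rightarrow> nat \<Rightarrow> bool" where
  "sign_changes_ge f n \<longleftrightarrow> (\<exists>x :: nat \<Rightarrow> real.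
      (\<forall>i<n. x i < x (Suc i)) \<and> (\<forall>i<n. f (x i) * f (x (Suc i)) < 0))"

definition Qop :: "(real \<Rightarrow> real) \<Rightarrow> real \<Rightarrow> real \<Rightarrow> real \<Rightarrow> (real \<Rightarrow> real) \<Rightarrow> real \<Rightarrow> real" where
  "Qop k a m b u x = integral UNIV (\<lambda>y. k (x - y) * gfun a m b (u y))"

definition w1 :: "(real \<Rightarrow> real) \<Rightarrow> real \<Rightarrow> real" where
  "w1 k x = integral {x..} k"

definition cstar :: "(real \<Rightarrow> real) \<Rightarrow> real \<Rightarrow> real \<Rightarrow> real \<Rightarrow> real" where
  "cstar k a m b = Sup {x. Qop k a m b (w1 k) x = a} / 2"

definition w2 :: "(real \<Rightarrow> real) \<Rightarrow> real \<Rightarrow> real \<Rightarrow> real \<Rightarrow> real \<Rightarrow> real" where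
  "w2 k a m b x = Qop k a m b (w1 k) (x + cstar k a m b)"

definition Wn :: "(real \<Rightarrow> real) \<Rightarrow> real \<Rightarrow> real \<Rightarrow> real \<Rightarrow> nat \<Rightarrow> real \<Rightarrow> real" where
  "Wn k a m b n x = (if even n then w1 k (x - real n * cstar k a m b)
                     else w2 k a m b (x - real n * cstar k a m b))"

definition lastlevel :: "(real \<Rightarrow> real) \<Rightarrow> real \<Rightarrow> real" where
  "lastlevel f l = Sup {x. f x = l}"

end

theory Submission
  imports Defs
begin

text \<open>Let \<open>p\<close> and \<open>q\<close> be the last points where \<open>w\<^sub>1 > b\<close> and \<open>w\<^sub>1 \<ge> a\<close>. As \<open>w\<^sub>1\<close> is a
  nonincreasing tail integral, \<open>g \<circ> w\<^sub>1\<close> agrees off \<open>{p, q}\<close> with \<open>m - 1\<close> times the indicator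
  of \<open>(-\<infinity>, p]\<close> plus the indicator of \<open>(-\<infinity>, q]\<close>, so \<open>w\<^sub>2\<close> is a combination of two
  translates of \<open>w\<^sub>1\<close>. Hence \<open>w\<^sub>1\<close> and \<open>w\<^sub>2\<close> are continuous, tend to \<open>0\<close> at \<open>+\<infinity>\<close> and to
  \<open>1\<close> resp. \<open>m\<close> at \<open>-\<infinity>\<close>, and their level sets at \<open>\<ell> \<in> (0, m)\<close> are nonempty and bounded
  above. Therefore \<open>\<xi>\<^sub>n(\<ell>) = n c\<^sup>* + \<Phi>\<^sub>i(\<ell>)\<close> with \<open>i = 1\<close> for even and \<open>i = 2\<close> for odd \<open>n\<close>,
  and the formula for \<open>c\<^sub>n(\<ell>)\<close> follows by subtraction.\<close>

lemma mem_down_closed_iff_le_Sup: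
  fixes S :: "real set"
  assumes "S \<noteq> {}" "bdd_above S" "\<And>y z. y \<in> S \<Longrightarrow> z \<le> y \<Longrightarrow> z \<in> S" "y \<noteq> Sup S"
  shows "y \<in> S \<longleftrightarrow> y \<le> Sup S"
proof
  assume "y \<in> S"
  then show "y \<le> Sup S" using assms(2) by (rule cSup_upper)
next
  assume "y \<le> Sup S"
  then have "y < Sup S" using assms(4) by simp
  then obtain z where "z \<in> S" "y < z" using less_cSup_iff[OF assms(1,2)] by blast
  then show "y \<in> S" using assms(3) by simp
qed

lemma level_set_nonempty_bdd_above:
  fixes f :: "real \<Rightarrow> real"
  assumes cont: "continuous_on UNIV f"
    and bot: "(f \<longlongrightarrow> \<alpha>) at_bot" and top: "(f \<longlongrightarrow> \<beta>) at_top"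
    and l: "\<beta> < l" "l < \<alpha>"
  shows "{x. f x = l} \<noteq> {}" "bdd_above {x. f x = l}"
proof -
  obtain x1 where x1: "\<And>y. y \<ge> x1 \<Longrightarrow> f y < l"
    using order_tendstoD(2)[OF top l(1)] by (auto simp: eventually_at_top_linorder)
  obtain x0 where x0: "\<And>y. y \<le> x0 \<Longrightarrow> l < f y"
    using order_tendstoD(1)[OF bot l(2)] by (auto simp: eventually_at_bot_linorder)
  have "f x1 \<le> l" "l \<le> f (min x0 x1)" using x0 x1 by (auto simp: less_imp_le)
  then obtain z where "f z = l"
    using IVT2'[of f x1 l "min x0 x1"] continuous_on_subset[OF cont] by auto
  then show "{x. f x = l} \<noteq> {}" by auto
  have "x \<le> x1" if "f x = l" for x
    by (rule ccontr) (use x1[of x] that in auto)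
  then show "bdd_above {x. f x = l}" by (intro bdd_aboveI[of _ x1]) auto
qed

lemma lastlevel_translate:
  fixes f :: "real \<Rightarrow> real"
  assumes "{x. f x = l} \<noteq> {}" "bdd_above {x. f x = l}"
  shows "lastlevel (\<lambda>x. f (x - s)) l = s + lastlevel f l"
proof -
  have "{x. f (x - s) = l} = (\<lambda>x. s + x) ` {x. f x = l}"
    by (auto simp: image_def intro!: exI[of _ "_ - s"])
  then show ?thesis
    unfolding lastlevel_def using Sup_add_eq[of "\<lambda>x. x", OF _ assms(1)] assms(2) by simp
qed

locale probability_density =
  fixes k :: "real \<Rightarrow> real"
  assumes nonneg: "\<And>x. k x \<ge> 0" and has_integral_1: "(k has_integral 1) UNIV"
begin

lemma absolutely_integrable: "k absolutely_integrable_on UNIV"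
  using has_integral_1 nonneg by (intro nonnegative_absolutely_integrable_1) auto

lemma integrable_on_lebesgue_set: "S \<in> sets lebesgue \<Longrightarrow> k integrable_on S"
  using set_integrable_subset[OF absolutely_integrable] set_lebesgue_integral_eq_integral(1)
  by blast

lemma w1_split:
  assumes "s \<le> t"
  shows "w1 k s = integral {s..t} k + w1 k t"
proof -
  have "(k has_integral (integral {s..t} k + integral {t..} k)) ({s..t} \<union> {t..})"
  proof (rule has_integral_Un)
    have "{s..t} \<inter> {t..} = {t}" using assms by auto
    then show "negligible ({s..t} \<inter> {t..})" by simp
  qed (auto intro!: integrable_integral integrable_on_lebesgue_set)
  moreover have "{s..t} \<union> {t..} = {s..}" using assms by auto
  ultimately show ?thesis unfolding w1_def by (metis integral_unique)
qed

lemma w1_nonneg: "w1 k s \<ge> 0"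
  unfolding w1_def using nonneg by (intro integral_nonneg integrable_on_lebesgue_set) auto

lemma w1_le_1: "w1 k s \<le> 1"
proof -
  have "integral {s..} k \<le> integral UNIV k"
    by (rule integral_subset_le) (auto intro: integrable_on_lebesgue_set simp: nonneg)
  then show ?thesis unfolding w1_def using has_integral_1 by (simp add: integral_unique)
qed

lemma w1_antimono: "s \<le> t \<Longrightarrow> w1 k t \<le> w1 k s"
  using w1_split[of s t] integral_nonneg[of k "{s..t}"] nonneg integrable_on_lebesgue_set[of "{s..t}"]
  by auto

lemma continuous_on_w1: "continuous_on UNIV (w1 k)"
proof -
  have "isCont (w1 k) x" for x
  proof -
    have "continuous_on {x-1..x+1} (\<lambda>y. w1 k (x-1) - integral {x-1..y} k)"
      by (intro continuous_intros indefinite_integral_continuous_1 integrable_on_lebesgue_set) auto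
    then have "continuous_on {x-1..x+1} (w1 k)"
      by (rule continuous_on_eq) (use w1_split[of "x-1"] in auto)
    then show ?thesis
      by (rule continuous_on_interior) auto
  qed
  then show ?thesis by (simp add: continuous_at_imp_continuous_on)
qed

lemma w1_tails:
  assumes "e > 0"
  obtains B where "\<And>x. x \<ge> B \<Longrightarrow> w1 k x < e \<and> 1 - e < w1 k (-x)"
proof -
  from has_integral_1[unfolded has_integral_alt'] assms obtain B where B: "B > 0"
    "\<And>a b. ball 0 B \<subseteq> cbox a b \<Longrightarrow> norm (integral (cbox a b) k - 1) < e"
    by auto
  have "w1 k x < e \<and> 1 - e < w1 k (-x)" if "x \<ge> B" for x
  proof -
    have "ball 0 B \<subseteq> cbox (-x) x" using that by (auto simp: dist_real_def)
    then have "1 - e < integral {-x..x} k" using B(2)[of "-x" x] by auto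
    moreover have "w1 k (-x) = integral {-x..x} k + w1 k x" using w1_split[of "-x" x] that B by auto
    ultimately show ?thesis using w1_le_1[of "-x"] w1_nonneg[of x] by auto
  qed
  then show ?thesis using that by blast
qed

lemma w1_tendsto_at_top: "(w1 k \<longlongrightarrow> 0) at_top"
proof (rule tendstoI)
  fix e :: real assume "e > 0"
  then obtain B where "\<And>x. x \<ge> B \<Longrightarrow> w1 k x < e" using w1_tails by metis
  then show "\<forall>\<^sub>F x in at_top. dist (w1 k x) 0 < e"
    using w1_nonneg by (auto simp: eventually_at_top_linorder dist_real_def)
qed

lemma w1_tendsto_at_bot: "(w1 k \<longlongrightarrow> 1) at_bot"
proof (rule tendstoI)
  fix e :: real assume "e > 0"
  then obtain B where B: "\<And>x. x \<ge> B \<Longrightarrow> 1 - e < w1 k (-x)" using w1_tails by metis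
  have "dist (w1 k x) 1 < e" if "x \<le> -B" for x
    using B[of "-x"] that w1_le_1[of x] by (simp add: dist_real_def)
  then show "\<forall>\<^sub>F x in at_bot. dist (w1 k x) 1 < e"
    by (auto simp: eventually_at_bot_linorder)
qed

lemma w1_superlevel_iff:
  assumes "0 < v" "v < 1"
  shows "y \<noteq> Sup {y. v < w1 k y} \<Longrightarrow> v < w1 k y \<longleftrightarrow> y \<le> Sup {y. v < w1 k y}"
    and "y \<noteq> Sup {y. v \<le> w1 k y} \<Longrightarrow> v \<le> w1 k y \<longleftrightarrow> y \<le> Sup {y. v \<le> w1 k y}"
proof -
  obtain x0 where x0: "v < w1 k x0"
    using order_tendstoD(1)[OF w1_tendsto_at_bot assms(2)] by (auto simp: eventually_at_bot_linorder)
  obtain x1 where x1: "\<And>y. y \<ge> x1 \<Longrightarrow> w1 k y < v"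
    using order_tendstoD(2)[OF w1_tendsto_at_top assms(1)] by (auto simp: eventually_at_top_linorder)
  have le_x1: "y \<le> x1" if "v \<le> w1 k y" for y
    by (rule ccontr) (use x1[of y] that in auto)
  have "bdd_above {y. v < w1 k y}" "bdd_above {y. v \<le> w1 k y}"
    using le_x1 by (auto intro!: bdd_aboveI[of _ x1])
  moreover have "{y. v < w1 k y} \<noteq> {}" "{y. v \<le> w1 k y} \<noteq> {}"
    using x0 by (auto intro: less_imp_le)
  moreover have "v < w1 k z" if "v < w1 k y" "z \<le> y" for y z
    using that w1_antimono[of z y] by linarith
  moreover have "v \<le> w1 k z" if "v \<le> w1 k y" "z \<le> y" for y z
    using that w1_antimono[of z y] by linarith
  ultimately show
    "y \<noteq> Sup {y. v < w1 k y} \<Longrightarrow> v < w1 k y \<longleftrightarrow> y \<le> Sup {y. v < w1 k y}"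
    "y \<noteq> Sup {y. v \<le> w1 k y} \<Longrightarrow> v \<le> w1 k y \<longleftrightarrow> y \<le> Sup {y. v \<le> w1 k y}"
    using mem_down_closed_iff_le_Sup[of "{y. v < w1 k y}" y]
      mem_down_closed_iff_le_Sup[of "{y. v \<le> w1 k y}" y] by auto
qed

lemma has_integral_convolution_indicator_atMost:
  "((\<lambda>y. k (x - y) * indicator {..t} y) has_integral w1 k (x - t)) UNIV"
proof -
  define h where "h z = indicator {x-t..} z * k z" for z
  have "integrable lebesgue k"
    using absolutely_integrable by (simp add: set_integrable_def)
  then have h_int: "integrable lebesgue h"
    unfolding h_def by (subst mult.commute) (intro integrable_real_mult_indicator, auto)
  have reflect: "(\<lambda>y. h (x + -1 * y)) = (\<lambda>y. k (x - y) * indicator {..t} y)"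
    by (auto simp: h_def indicator_def fun_eq_iff)
  have conv_int: "integrable lebesgue (\<lambda>y. k (x - y) * indicator {..t} y)"
    using lebesgue_integrable_real_affine[OF h_int, of "-1" x] reflect by simp
  have "integral\<^sup>L lebesgue h = \<bar>-1\<bar> *\<^sub>R integral\<^sup>L lebesgue (\<lambda>y. h (x + -1 * y))"
    by (rule lebesgue_integral_real_affine) simp
  then have "integral\<^sup>L lebesgue (\<lambda>y. k (x - y) * indicator {..t} y) = integral\<^sup>L lebesgue h"
    using reflect by simp
  also have "\<dots> = integral UNIV h"
    by (rule integral_lebesgue[OF h_int, symmetric])
  also have "h = (\<lambda>z. if z \<in> {x-t..} then k z else 0)"
    by (auto simp: h_def fun_eq_iff)
  also have "integral UNIV \<dots> = w1 k (x - t)"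
    by (simp only: integral_restrict_UNIV w1_def)
  finally show ?thesis
    using has_integral_integral_lebesgue[OF conv_int] by simp
qed

lemma Qop_w1_eq:
  assumes "0 < a" "a < b" "b < 1"
  shows "Qop k a m b (w1 k) x =
           (m - 1) * w1 k (x - Sup {y. b < w1 k y}) + w1 k (x - Sup {y. a \<le> w1 k y})"
proof -
  define p where "p = Sup {y. b < w1 k y}"
  define q where "q = Sup {y. a \<le> w1 k y}"
  have "k (x - y) * gfun a m b (w1 k y) =
          (m - 1) * (k (x - y) * indicator {..p} y) + k (x - y) * indicator {..q} y"
    if "y \<in> UNIV - {p, q}" for y
    using w1_superlevel_iff(1)[of b y] w1_superlevel_iff(2)[of a y] that assms
    by (auto simp: p_def q_def gfun_def indicator_def algebra_simps)
  then have "Qop k a m b (w1 k) x =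
      integral UNIV (\<lambda>y. (m - 1) * (k (x - y) * indicator {..p} y) + k (x - y) * indicator {..q} y)"
    unfolding Qop_def by (intro integral_spike[of "{p, q}"]) auto
  also have "\<dots> = (m - 1) * w1 k (x - p) + w1 k (x - q)"
    by (intro integral_unique has_integral_add has_integral_mult_right
        has_integral_convolution_indicator_atMost)
  finally show ?thesis by (simp add: p_def q_def)
qed

lemma w1_translate_tendsto:
  "((\<lambda>x. w1 k (x - p)) \<longlongrightarrow> 0) at_top" "((\<lambda>x. w1 k (x - p)) \<longlongrightarrow> 1) at_bot"
proof -
  have "filterlim (\<lambda>x. x - p) at_top at_top"
    by (rule filterlim_tendsto_add_at_top[OF tendsto_const filterlim_ident, of "-p", simplified])
  then show "((\<lambda>x. w1 k (x - p)) \<longlongrightarrow> 0) at_top"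
    by (rule filterlim_compose[OF w1_tendsto_at_top])
  have "filterlim (\<lambda>x. x - p) at_bot at_bot"
    using filterlim_tendsto_add_at_bot_iff[OF tendsto_const, of "-p" "\<lambda>x. x"] filterlim_ident
    by simp
  then show "((\<lambda>x. w1 k (x - p)) \<longlongrightarrow> 1) at_bot"
    by (rule filterlim_compose[OF w1_tendsto_at_bot])
qed

lemma w2_eq_translates_w1:
  assumes "0 < a" "a < b" "b < 1"
  obtains p q where "\<And>x. w2 k a m b x = (m - 1) * w1 k (x - p) + w1 k (x - q)"
proof
  fix x
  show "w2 k a m b x = (m - 1) * w1 k (x - (Sup {y. b < w1 k y} - cstar k a m b))
                        + w1 k (x - (Sup {y. a \<le> w1 k y} - cstar k a m b))"
    unfolding w2_def Qop_w1_eq[OF assms] by (simp add: algebra_simps)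
qed

lemma continuous_on_w2:
  assumes "0 < a" "a < b" "b < 1"
  shows "continuous_on UNIV (w2 k a m b)"
proof -
  obtain p q where w2: "\<And>x. w2 k a m b x = (m - 1) * w1 k (x - p) + w1 k (x - q)"
    using w2_eq_translates_w1[OF assms] by blast
  show ?thesis
    unfolding w2 by (intro continuous_intros continuous_on_compose2[OF continuous_on_w1]) auto
qed

lemma w2_tendsto:
  assumes "0 < a" "a < b" "b < 1"
  shows "(w2 k a m b \<longlongrightarrow> 0) at_top" "(w2 k a m b \<longlongrightarrow> m) at_bot"
proof -
  obtain p q where w2: "\<And>x. w2 k a m b x = (m - 1) * w1 k (x - p) + w1 k (x - q)"
    using w2_eq_translates_w1[OF assms] by blast
  have "((\<lambda>x. (m - 1) * w1 k (x - p) + w1 k (x - q)) \<longlongrightarrow> (m - 1) * 0 + 0) at_top"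
    by (intro tendsto_intros w1_translate_tendsto)
  then show "(w2 k a m b \<longlongrightarrow> 0) at_top" unfolding w2 by simp
  have "((\<lambda>x. (m - 1) * w1 k (x - p) + w1 k (x - q)) \<longlongrightarrow> (m - 1) * 1 + 1) at_bot"
    by (intro tendsto_intros w1_translate_tendsto)
  then show "(w2 k a m b \<longlongrightarrow> m) at_bot" unfolding w2 by simp
qed

end

theorem corollary1:
  fixes a m b :: real and k :: "real \<Rightarrow> real"
  assumes abm: "0 < a" "a < m" "m < b" "b < 1"
    and pd: "piecewise_diff k"
    and H1: "\<forall>x. k x \<ge> 0" "(k has_integral 1) UNIV"
    and H2: "\<forall>x. k x = k (- x)"
    and H3: "\<exists>\<sigma>::ereal. 0 < \<sigma> \<and> (\<forall>x. ereal \<bar>x\<bar> < \<sigma> \<longrightarrow> k x > 0)"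
    and H4: "\<forall>lam A B. 0 < lam \<and> lam < 1 \<and> A > B \<longrightarrow>
               \<not> sign_changes_ge (\<lambda>x. k (x - A) - lam * k (x - B)) 2"
    and H5: "\<forall>lam A B. 0 < lam \<and> lam < 1 \<and> A > B \<longrightarrow>
               (\<forall>\<^sub>F r in at_top. \<not> sign_changes_ge
                  (\<lambda>x. k (x - r - A) - lam * k (x - r - B) - k (x + r + A) + lam * k (x + r + B)) 4)"
    and w2_bound: "\<exists>M<b. \<forall>x. \<bar>w2 k a m b x\<bar> \<le> M"
  shows "\<forall>l\<in>{0<..<m}. \<forall>n\<ge>1.
           lastlevel (Wn k a m b n) l - lastlevel (Wn k a m b (n - 1)) l =
             (if even n then cstar k a m b + lastlevel (w1 k) l - lastlevel (w2 k a m b) l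
              else cstar k a m b + lastlevel (w2 k a m b) l - lastlevel (w1 k) l)"
proof (intro ballI allI impI)
  fix l :: real and n :: nat
  assume l: "l \<in> {0<..<m}" and n: "1 \<le> n"
  interpret probability_density k using H1 by unfold_locales auto
  have ab: "0 < a" "a < b" "b < 1" using abm by auto
  have w1_level: "lastlevel (\<lambda>x. w1 k (x - s)) l = s + lastlevel (w1 k) l" for s
    using l abm by (intro lastlevel_translate level_set_nonempty_bdd_above[OF continuous_on_w1
          w1_tendsto_at_bot w1_tendsto_at_top]) auto
  have w2_level: "lastlevel (\<lambda>x. w2 k a m b (x - s)) l = s + lastlevel (w2 k a m b) l" for s
    using l by (intro lastlevel_translate level_set_nonempty_bdd_above[OF continuous_on_w2[OF ab]
          w2_tendsto(2)[OF ab] w2_tendsto(1)[OF ab]]) auto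
  have xi: "lastlevel (Wn k a m b j) l = real j * cstar k a m b +
              (if even j then lastlevel (w1 k) l else lastlevel (w2 k a m b) l)" for j
    by (simp add: Wn_def[abs_def] w1_level w2_level)
  show "lastlevel (Wn k a m b n) l - lastlevel (Wn k a m b (n - 1)) l =
          (if even n then cstar k a m b + lastlevel (w1 k) l - lastlevel (w2 k a m b) l
           else cstar k a m b + lastlevel (w2 k a m b) l - lastlevel (w1 k) l)"
    using n unfolding xi by (simp add: of_nat_diff algebra_simps)
qed

end
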